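(* Let $v$ be a vertex of $K$ and let $P$ and $Q$ be chain-connected finite subcomplexes of $K$ containing $v$. If there is a cell-preserving isomorphism $\phi:P\to Q$ with $\phi(v)=v$, then $P=Q$.
   Context: $K$ is the decorated combinatorial tiling: a 2-dimensional CW-complex homeomorphic to the open disk, built as follows. A decorated pentagon has boundary vertices $v_1,\dots,v_5$ in cyclic order (indices mod 5) with corner labels $1,\dots,5$, corner $v_i$ labelled $i$. The rule $\omega$ adds a vertex $m_i$ inside each edge $v_iv_{i+1}$, interior vertices $c_1,\dots,c_5$, edges $c_ic_{i+1}$, $c_im_i$, and replaces the face by the central pentagon $c_1\cdots c_5$ (label $i+1$ at $c_i$) and petals $v_i\,m_i\,c_i\,c_{i-1}\,m_{i-1}$ with labels $i,i+1,i+2,i+3,i+4$ (mod 5) at these corners. $K_0$ is one decorated pentagon, $K_n=\omega^n(K_0)$, $K_n$ embeds label-preservingly onto the central superpentagon $\omega^n(\text{central face of }\omega(K_0))$ of $K_{n+1}$, and $K$ is the direct limit. Cell-preserving isomorphisms are required to preserve the corner labels (decorations). Chain-connected: any two faces are joined by a finite chain of faces of the subcomplex, consecutive ones sharing an edge. *)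

theory Defs
  imports Main "HOL-Library.FSet"
begin

text \<open>Vertex names of the finite stages K_n = omega^n(K_0).
  V k: corner of K_0 with (0-based) label k;
  M e: the vertex inserted in the middle of the edge e (a 2-element set);
  C F k: the interior vertex c_k created inside the face F.\<close>
datatype vx = V nat | M "vx fset" | C "vx list" nat

text \<open>A decorated face is the list of its 5 corners indexed by their label:
  F ! L is the corner carrying label L (0-based, L = 0..4, i.e. paper label L+1).
  Its boundary cycle is F!0, F!1, ..., F!4 (consecutive labels).\<close>

definition petal_corner :: "vx list \<Rightarrow> nat \<Rightarrow> nat \<Rightarrow> vx" where
  "petal_corner F k L =
     (let v = (\<lambda>i. F ! (i mod 5));
          m = (\<lambda>i. M {|v i, v (i + 1)|});
          c = (\<lambda>i. C F (i mod 5));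
          d = (L + 5 - k) mod 5
      in if d = 0 then v k
         else if d = 1 then m k
         else if d = 2 then c k
         else if d = 3 then c (k + 4)
         else m (k + 4))"

text \<open>The rule omega applied to one face: central pentagon (corner c_i with label i+1)
  and the five petals v_k m_k c_k c_(k-1) m_(k-1) with labels k,...,k+4.\<close>
definition omega_face :: "vx list \<Rightarrow> vx list set" where
  "omega_face F =
     insert (map (\<lambda>L. C F ((L + 4) mod 5)) [0..<5])
            ((\<lambda>k. map (petal_corner F k) [0..<5]) ` {0..<5})"

definition omega :: "vx list set \<Rightarrow> vx list set" where
  "omega X = (\<Union>F\<in>X. omega_face F)"

definition F0 :: "vx list" where
  "F0 = [V 0, V 1, V 2, V 3, V 4]"

definition Kn :: "nat \<Rightarrow> vx list set" where
  "Kn n = (omega ^^ n) {F0}"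

text \<open>The label-preserving embedding K_n -> K_(n+1) onto the central superpentagon
  omega^n(central face of omega(K_0)).\<close>
primrec iota :: "vx \<Rightarrow> vx" where
  "iota (V k) = C F0 ((k + 4) mod 5)"
| "iota (M s) = M (fimage iota s)"
| "iota (C F k) = C (map iota F) k"

text \<open>Direct limit K: a vertex of K is the class of (n, x) with x a vertex of K_n,
  where (n,x) and (m,y) are identified iff they agree after pushing to level n+m.\<close>
type_synonym kvert = "(nat \<times> vx) set"

definition cls :: "nat \<Rightarrow> vx \<Rightarrow> kvert" where
  "cls n x = {(m, y). (iota ^^ m) x = (iota ^^ n) y}"

definition K_faces :: "kvert list set" where
  "K_faces = {map (cls n) F | n F. F \<in> Kn n}"

text \<open>A subcomplex is given by a set of faces of K (together with their closures).\<close>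
definition verts :: "kvert list set \<Rightarrow> kvert set" where
  "verts P = (\<Union>F\<in>P. set F)"

definition face_edges :: "kvert list \<Rightarrow> kvert set set" where
  "face_edges F = {{F ! i, F ! ((i + 1) mod 5)} | i. i < 5}"

definition share_edge :: "kvert list \<Rightarrow> kvert list \<Rightarrow> bool" where
  "share_edge F G \<longleftrightarrow> face_edges F \<inter> face_edges G \<noteq> {}"

definition chain_connected :: "kvert list set \<Rightarrow> bool" where
  "chain_connected P \<longleftrightarrow>
     (\<forall>F\<in>P. \<forall>G\<in>P. \<exists>cs. cs \<noteq> [] \<and> hd cs = F \<and> last cs = G \<and> set cs \<subseteq> P \<and>
        (\<forall>i. Suc i < length cs \<longrightarrow> share_edge (cs ! i) (cs ! Suc i)))"

definition cell_iso :: "(kvert \<Rightarrow> kvert) \<Rightarrow> kvert list set \<Rightarrow> kvert list set \<Rightarrow> bool" where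
  "cell_iso \<phi> P Q \<longleftrightarrow> bij_betw \<phi> (verts P) (verts Q) \<and> (map \<phi>) ` P = Q"

end

theory Submission
  imports Defs
begin

text \<open>A labelled face of K is determined by any one of its labelled corners. At each level K_n
  this is proved by induction, together with the same statement for an edge labelled at one of its
  endpoints (needed because a midpoint vertex lies on two faces of the previous level). A corner or
  edge of a face of omega(F) is an old corner of F, or contains a midpoint or a central vertex of F,
  and the rank of vertices distinguishes these cases; each of them determines the parent F at
  level n, and inside omega(F) the claim is a finite check. Since the embeddings K_n \<rightarrow> K_(n+1)
  are injective, the statement passes to the direct limit. Hence an isomorphism fixing v fixes the
  face of P through v, then every face sharing an edge with a fixed face, and so all of P.\<close>

section \<open>One subdivision step\<close>

definition midpoint :: "vx list \<Rightarrow> nat \<Rightarrow> vx" where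
  "midpoint F i = M {|F!i, F!(Suc i mod 5)|}"

definition central :: "vx list \<Rightarrow> vx list" where
  "central F = map (\<lambda>L. C F ((L + 4) mod 5)) [0..<5]"

definition petal :: "vx list \<Rightarrow> nat \<Rightarrow> vx list" where
  "petal F k = map (petal_corner F k) [0..<5]"

lemma omega_face_eq: "omega_face F = insert (central F) (petal F ` {0..<5})"
  by (simp add: omega_face_def central_def petal_def)

lemma central_eq: "central F = [C F 4, C F 0, C F 1, C F 2, C F 3]"
  by (simp add: central_def upt_rec)

lemma petal_eq:
  "petal F 0 = [F!0, midpoint F 0, C F 0, C F 4, midpoint F 4]"
  "petal F 1 = [midpoint F 0, F!1, midpoint F 1, C F 1, C F 0]"
  "petal F 2 = [C F 1, midpoint F 1, F!2, midpoint F 2, C F 2]"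
  "petal F 3 = [C F 3, C F 2, midpoint F 2, F!3, midpoint F 3]"
  "petal F 4 = [midpoint F 4, C F 4, C F 3, midpoint F 3, F!4]"
  by (simp_all add: petal_def petal_corner_def midpoint_def upt_rec Let_def numeral_2_eq_2)

lemma less_5_cases: "(i::nat) < 5 \<Longrightarrow> i = 0 \<or> i = 1 \<or> i = 2 \<or> i = 3 \<or> i = 4"
  by auto

lemma all_less_5: "(\<forall>i<5. P i) \<longleftrightarrow> P 0 \<and> P 1 \<and> P 2 \<and> P 3 \<and> P (4::nat)"
  using less_5_cases by auto

lemma omega_face_cases:
  assumes "G \<in> omega_face F"
  obtains "G = central F" | "G = petal F 0" | "G = petal F 1" | "G = petal F 2"
    | "G = petal F 3" | "G = petal F 4"
proof -
  from assms consider "G = central F" | k where "k < 5" "G = petal F k"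
    by (auto simp: omega_face_eq)
  then show thesis
    by cases (use that less_5_cases in blast)+
qed

text \<open>The rank of a vertex is the level at which it is created. The last clause of wf_face makes
  every vertex created by omega from a level-n face have rank exactly n+1, hence differ from all
  older vertices.\<close>

primrec rank :: "vx \<Rightarrow> nat" where
  "rank (V k) = 0"
| "rank (M s) = Suc (Max (insert 0 (fset (rank |`| s))))"
| "rank (C F k) = Suc (Max (insert 0 (set (map rank F))))"

text \<open>Since iota identifies V k with V (k + 5), it is injective only on well-named vertices.\<close>

primrec well_named :: "vx \<Rightarrow> bool" where
  "well_named (V k) = (k < 5)"
| "well_named (M s) = (False |\<notin>| well_named |`| s)"
| "well_named (C F k) = (False \<notin> set (map well_named F))"

definition wf_face :: "nat \<Rightarrow> vx list \<Rightarrow> bool" where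
  "wf_face n F \<longleftrightarrow> length F = 5 \<and> distinct F \<and> (\<forall>x\<in>set F. well_named x \<and> rank x \<le> n) \<and>
     (\<forall>i<5. rank (F!i) = n \<or> rank (F!(Suc i mod 5)) = n)"

lemma wf_face_5_iff:
  "wf_face n [x0, x1, x2, x3, x4] \<longleftrightarrow>
     distinct [x0, x1, x2, x3, x4] \<and> (\<forall>x\<in>{x0, x1, x2, x3, x4}. well_named x \<and> rank x \<le> n) \<and>
     (rank x0 = n \<or> rank x1 = n) \<and> (rank x1 = n \<or> rank x2 = n) \<and> (rank x2 = n \<or> rank x3 = n) \<and>
     (rank x3 = n \<or> rank x4 = n) \<and> (rank x4 = n \<or> rank x0 = n)"
  unfolding wf_face_def all_less_5 by (simp add: numeral_2_eq_2)

lemma rank_C_wf_face: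
  assumes "wf_face n F" shows "rank (C F k) = Suc n"
proof -
  from assms have "rank (F!0) = n \<or> rank (F!1) = n" and "length F = 5"
    unfolding wf_face_def by (auto dest: spec[of _ 0])
  then have "n \<in> set (map rank F)" by auto
  moreover have "\<forall>x\<in>set F. rank x \<le> n" using assms by (simp add: wf_face_def)
  ultimately have "Max (insert 0 (set (map rank F))) = n" by (intro Max_eqI) auto
  then show ?thesis by simp
qed

lemma rank_midpoint_wf_face:
  assumes "wf_face n F" "i < 5" shows "rank (midpoint F i) = Suc n"
proof -
  have "rank (F!i) \<le> n" "rank (F!(Suc i mod 5)) \<le> n"
    using assms by (auto simp: wf_face_def)
  moreover have "rank (F!i) = n \<or> rank (F!(Suc i mod 5)) = n"
    using assms by (simp add: wf_face_def)
  ultimately have "Max (insert 0 {rank (F!i), rank (F!(Suc i mod 5))}) = n"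
    by (intro Max_eqI) auto
  then show ?thesis by (simp add: midpoint_def)
qed

lemma fdoubleton_eq_iff: "{|a, b|} = {|c, d|} \<longleftrightarrow> (a = c \<and> b = d) \<or> (a = d \<and> b = c)"
  by (simp flip: fset_inject add: doubleton_eq_iff)

lemma midpoint_eq_iff:
  assumes "wf_face n F" "i < 5" "j < 5"
  shows "midpoint F i = midpoint F j \<longleftrightarrow> i = j"
proof
  assume "midpoint F i = midpoint F j"
  then have "F!i = F!j \<and> F!(Suc i mod 5) = F!(Suc j mod 5) \<or>
      F!i = F!(Suc j mod 5) \<and> F!(Suc i mod 5) = F!j"
    by (simp add: midpoint_def fdoubleton_eq_iff)
  moreover have "F!a = F!b \<longleftrightarrow> a = b" if "a < 5" "b < 5" for a b
    using assms(1) that nth_eq_iff_index_eq[of F] by (simp add: wf_face_def)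
  ultimately have "i = j \<or> i = Suc j mod 5 \<and> Suc i mod 5 = j"
    using assms(2,3) by auto
  moreover have "Suc (Suc j mod 5) mod 5 \<noteq> j"
    using less_5_cases[OF assms(3)] by (elim disjE) simp_all
  ultimately show "i = j" by blast
qed simp

lemma midpoint_neq_C: "midpoint F i \<noteq> C H k" "C H k \<noteq> midpoint F i"
  by (simp_all add: midpoint_def)

lemma neq_by_rank: "rank x < rank y \<Longrightarrow> x \<noteq> y" "rank y < rank x \<Longrightarrow> x \<noteq> y"
  by auto

lemma wf_face_vertex_simps:
  assumes "wf_face n F"
  shows "i < 5 \<Longrightarrow> j < 5 \<Longrightarrow> F!i = F!j \<longleftrightarrow> i = j"
    and "i < 5 \<Longrightarrow> rank (F!i) \<le> n"
    and "i < 5 \<Longrightarrow> well_named (F!i)"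
    and "rank (C F k) = Suc n"
    and "well_named (C F k)"
    and "i < 5 \<Longrightarrow> rank (midpoint F i) = Suc n"
    and "i < 5 \<Longrightarrow> well_named (midpoint F i)"
    and "i < 5 \<Longrightarrow> j < 5 \<Longrightarrow> midpoint F i = midpoint F j \<longleftrightarrow> i = j"
  using assms rank_C_wf_face[OF assms] rank_midpoint_wf_face[OF assms] midpoint_eq_iff[OF assms]
    nth_eq_iff_index_eq[of F]
  by (simp_all add: wf_face_def midpoint_def fimage_iff)

declare rank.simps [simp del] well_named.simps [simp del]

lemmas omega_face_simps =
  central_eq petal_eq[unfolded One_nat_def] midpoint_neq_C neq_by_rank less_Suc_eq_le

lemma wf_face_omega_face:
  assumes "wf_face n F" "G \<in> omega_face F"
  shows "wf_face (Suc n) G"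
  using assms(2)
  by (cases rule: omega_face_cases)
    (simp_all add: omega_face_simps wf_face_5_iff wf_face_vertex_simps[OF assms(1)] le_Suc_eq)

lemma omega_face_corner_unique:
  assumes "wf_face n F" "G \<in> omega_face F" "H \<in> omega_face F" "L < 5" "G!L = H!L"
  shows "G = H"
  using assms(2,3,5) less_5_cases[OF assms(4)]
  by (elim omega_face_cases disjE; hypsubst;
      simp add: omega_face_simps wf_face_vertex_simps[OF assms(1)])

lemma omega_face_edge_unique_same_or_next:
  assumes "wf_face n F" "G \<in> omega_face F" "H \<in> omega_face F" "i < 5"
    and "j = i \<or> j = Suc i mod 5"
    and "{G!i, G!(Suc i mod 5)} = {H!j, H!(Suc j mod 5)}"
  shows "G = H"
  using assms(2,3,5,6) less_5_cases[OF assms(4)]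
  by (elim omega_face_cases disjE; hypsubst;
      simp add: omega_face_simps doubleton_eq_iff wf_face_vertex_simps[OF assms(1)])

lemma omega_face_edge_unique:
  assumes "wf_face n F" "G \<in> omega_face F" "H \<in> omega_face F" "i < 5" "j < 5"
    and "j = i \<or> j = Suc i mod 5 \<or> i = Suc j mod 5"
    and "{G!i, G!(Suc i mod 5)} = {H!j, H!(Suc j mod 5)}"
  shows "G = H"
  using assms(6) omega_face_edge_unique_same_or_next[OF assms(1-4) _ assms(7)]
    omega_face_edge_unique_same_or_next[OF assms(1,3,2,5) _ assms(7)[symmetric]] by blast

lemma omega_face_corner_cases:
  assumes "G \<in> omega_face F" "L < 5"
  shows "G!L = F!L \<or> G!L = midpoint F L \<or> G!L = midpoint F ((L + 4) mod 5) \<or> (\<exists>k. G!L = C F k)"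
  using assms(1) less_5_cases[OF assms(2)]
  by (elim omega_face_cases disjE; hypsubst; simp add: omega_face_simps)

lemma omega_face_edge_cases:
  assumes "length F = 5" "G \<in> omega_face F" "i < 5"
  shows "(\<exists>k. C F k \<in> {G!i, G!(Suc i mod 5)}) \<or>
    midpoint F i \<in> {G!i, G!(Suc i mod 5)} \<and> {G!i, G!(Suc i mod 5)} \<subseteq> insert (midpoint F i) (set F)"
  using assms(2) less_5_cases[OF assms(3)]
  by (elim omega_face_cases disjE; hypsubst; auto simp: omega_face_simps assms(1))

section \<open>Labelled corners and edges determine faces of K_n\<close>

definition corners_determine_faces :: "'a list set \<Rightarrow> bool" where
  "corners_determine_faces X \<longleftrightarrow> (\<forall>F\<in>X. \<forall>G\<in>X. \<forall>L<5. F!L = G!L \<longrightarrow> F = G)"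

text \<open>The indices i and j are equal or adjacent iff the two edges have a common label at an
  endpoint.\<close>

definition edges_determine_faces :: "'a list set \<Rightarrow> bool" where
  "edges_determine_faces X \<longleftrightarrow> (\<forall>F\<in>X. \<forall>G\<in>X. \<forall>i<5. \<forall>j<5.
     (j = i \<or> j = Suc i mod 5 \<or> i = Suc j mod 5) \<longrightarrow>
     {F!i, F!(Suc i mod 5)} = {G!j, G!(Suc j mod 5)} \<longrightarrow> F = G)"

lemma corners_determine_facesD:
  "corners_determine_faces X \<Longrightarrow> F \<in> X \<Longrightarrow> G \<in> X \<Longrightarrow> L < 5 \<Longrightarrow> F!L = G!L \<Longrightarrow> F = G"
  unfolding corners_determine_faces_def by blast

lemma edges_determine_facesD:
  "edges_determine_faces X \<Longrightarrow> F \<in> X \<Longrightarrow> G \<in> X \<Longrightarrow> i < 5 \<Longrightarrow> j < 5 \<Longrightarrow>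
    j = i \<or> j = Suc i mod 5 \<or> i = Suc j mod 5 \<Longrightarrow>
    {F!i, F!(Suc i mod 5)} = {G!j, G!(Suc j mod 5)} \<Longrightarrow> F = G"
  unfolding edges_determine_faces_def by blast

lemma C_corner_parent:
  assumes "wf_face n F" "G \<in> omega_face F" "L < 5" "G!L = C H k" "rank (C H k) = Suc n"
  shows "H = F"
  using omega_face_corner_cases[OF assms(2,3)] wf_face_vertex_simps(2)[OF assms(1,3)] assms(4,5)
  by (auto simp: midpoint_neq_C)

lemma C_edge_parent:
  assumes "wf_face n F" "G \<in> omega_face F" "i < 5" "C H k \<in> {G!i, G!(Suc i mod 5)}"
    and "rank (C H k) = Suc n"
  shows "H = F"
  using assms C_corner_parent[OF assms(1,2), of i H k] C_corner_parent[OF assms(1,2), of "Suc i mod 5" H k]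
  by auto

lemma midpoint_eq_imp_edge_eq:
  "midpoint F i = midpoint G j \<Longrightarrow> {F!i, F!(Suc i mod 5)} = {G!j, G!(Suc j mod 5)}"
  by (auto simp: midpoint_def fdoubleton_eq_iff)

lemma near_labels_adjacent:
  assumes "L < 5" "a = L \<or> a = (L + 4) mod 5" "b = L \<or> b = (L + 4) mod 5"
  shows "b = a \<or> b = Suc a mod 5 \<or> a = Suc b mod 5"
  using less_5_cases[OF assms(1)] assms(2,3) by (elim disjE) simp_all

lemma same_corner_same_parent:
  assumes wf: "wf_face n F'" "wf_face n G'" and X: "F' \<in> X" "G' \<in> X"
    and corners: "corners_determine_faces X" and edges: "edges_determine_faces X"
    and F: "F \<in> omega_face F'" and G: "G \<in> omega_face G'" and L: "L < 5" and FG: "F!L = G!L"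
  shows "F' = G'"
proof -
  have rank_old: "rank (F'!L) \<le> n" "rank (G'!L) \<le> n"
    using wf_face_vertex_simps(2)[OF wf(1) L] wf_face_vertex_simps(2)[OF wf(2) L] .
  have L4: "(L + 4) mod 5 < 5" by simp
  note rank_new = wf_face_vertex_simps(4,6)[OF wf(1)] wf_face_vertex_simps(4,6)[OF wf(2)]
  from omega_face_corner_cases[OF G L]
  consider (old) "G!L = G'!L"
    | (mid) b where "b = L \<or> b = (L + 4) mod 5" "G!L = midpoint G' b"
    | (cell) k where "G!L = C G' k"
    by blast
  then show ?thesis
  proof cases
    case old
    then have "rank (F!L) \<le> n" using FG rank_old by simp
    then have "F!L = F'!L"
      using omega_face_corner_cases[OF F L] rank_new L4 L by auto
    then show ?thesis
      using FG old by (intro corners_determine_facesD[OF corners X L]) simp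
  next
    case mid
    have "rank (F!L) = Suc n" using FG mid L rank_new by auto
    then have "F!L \<noteq> F'!L" "F!L \<noteq> C F' k" for k
      using rank_old FG mid(2) midpoint_neq_C by auto
    then obtain a where a: "a = L \<or> a = (L + 4) mod 5" "F!L = midpoint F' a"
      using omega_face_corner_cases[OF F L] by metis
    then have "{F'!a, F'!(Suc a mod 5)} = {G'!b, G'!(Suc b mod 5)}"
      using mid FG midpoint_eq_imp_edge_eq by metis
    moreover have "a < 5" "b < 5" using a(1) mid(1) L by auto
    ultimately show ?thesis
      using edges_determine_facesD[OF edges X \<open>a < 5\<close> \<open>b < 5\<close> near_labels_adjacent[OF L a(1) mid(1)]]
      by simp
  next
    case cell
    then show ?thesis
      using C_corner_parent[OF wf(1) F L] FG rank_new by metis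
  qed
qed

lemma same_edge_same_parent:
  assumes wf: "wf_face n F'" "wf_face n G'" and X: "F' \<in> X" "G' \<in> X"
    and edges: "edges_determine_faces X"
    and F: "F \<in> omega_face F'" and G: "G \<in> omega_face G'" and ij: "i < 5" "j < 5"
    and adj: "j = i \<or> j = Suc i mod 5 \<or> i = Suc j mod 5"
    and FG: "{F!i, F!(Suc i mod 5)} = {G!j, G!(Suc j mod 5)}"
  shows "F' = G'"
proof -
  have len: "length F' = 5" "length G' = 5" using wf by (simp_all add: wf_face_def)
  note rank_new = wf_face_vertex_simps(4,6)[OF wf(1)] wf_face_vertex_simps(4,6)[OF wf(2)]
  from omega_face_edge_cases[OF len(1) F ij(1)] omega_face_edge_cases[OF len(2) G ij(2)]
  consider (cell_F) k where "C F' k \<in> {G!j, G!(Suc j mod 5)}"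
    | (cell_G) k where "C G' k \<in> {F!i, F!(Suc i mod 5)}"
    | (mid) "midpoint F' i \<in> insert (midpoint G' j) (set G')"
    using FG by blast
  then show ?thesis
  proof cases
    case cell_F
    then show ?thesis using C_edge_parent[OF wf(2) G ij(2)] rank_new by metis
  next
    case cell_G
    then show ?thesis using C_edge_parent[OF wf(1) F ij(1)] rank_new by metis
  next
    case mid
    moreover have "midpoint F' i \<notin> set G'"
      using wf(2) rank_new(2)[OF ij(1)] by (auto simp: wf_face_def)
    ultimately have "midpoint F' i = midpoint G' j" by simp
    from midpoint_eq_imp_edge_eq[OF this] show ?thesis
      by (rule edges_determine_facesD[OF edges X ij adj])
  qed
qed

lemma omega_corners_edges_determine_faces:
  assumes wf: "\<forall>F\<in>X. wf_face n F"
    and corners: "corners_determine_faces X" and edges: "edges_determine_faces X"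
  shows "corners_determine_faces (omega X) \<and> edges_determine_faces (omega X)"
proof
  show "corners_determine_faces (omega X)"
    unfolding corners_determine_faces_def
  proof (intro ballI allI impI)
    fix F G L assume "F \<in> omega X" "G \<in> omega X" "L < (5::nat)" "F!L = G!L"
    moreover obtain F' G' where "F' \<in> X" "F \<in> omega_face F'" "G' \<in> X" "G \<in> omega_face G'"
      using \<open>F \<in> omega X\<close> \<open>G \<in> omega X\<close> by (auto simp: omega_def)
    ultimately show "F = G"
      using same_corner_same_parent[OF wf[rule_format] wf[rule_format] _ _ corners edges]
        omega_face_corner_unique wf by metis
  qed
  show "edges_determine_faces (omega X)"
    unfolding edges_determine_faces_def
  proof (intro ballI allI impI)
    fix F G i j
    assume "F \<in> omega X" "G \<in> omega X" "i < (5::nat)" "j < (5::nat)"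
      and "j = i \<or> j = Suc i mod 5 \<or> i = Suc j mod 5"
      and "{F!i, F!(Suc i mod 5)} = {G!j, G!(Suc j mod 5)}"
    moreover obtain F' G' where "F' \<in> X" "F \<in> omega_face F'" "G' \<in> X" "G \<in> omega_face G'"
      using \<open>F \<in> omega X\<close> \<open>G \<in> omega X\<close> by (auto simp: omega_def)
    ultimately show "F = G"
      using same_edge_same_parent[OF wf[rule_format] wf[rule_format] _ _ edges]
        omega_face_edge_unique wf by metis
  qed
qed

lemma Kn_Suc: "Kn (Suc n) = omega (Kn n)"
  by (simp add: Kn_def)

lemma wf_face_Kn: "F \<in> Kn n \<Longrightarrow> wf_face n F"
proof (induction n arbitrary: F)
  case 0
  then show ?case
    by (simp add: Kn_def F0_def wf_face_5_iff rank.simps well_named.simps)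
next
  case (Suc n)
  then show ?case
    using wf_face_omega_face by (auto simp: Kn_Suc omega_def)
qed

lemma Kn_corners_edges_determine_faces: "corners_determine_faces (Kn n) \<and> edges_determine_faces (Kn n)"
proof (induction n)
  case 0
  then show ?case
    by (simp add: Kn_def corners_determine_faces_def edges_determine_faces_def)
next
  case (Suc n)
  then show ?case
    using omega_corners_edges_determine_faces[of "Kn n" n] wf_face_Kn by (simp add: Kn_Suc)
qed

section \<open>Passage to the direct limit\<close>

primrec unlift :: "vx \<Rightarrow> vx" where
  "unlift (V k) = V k"
| "unlift (M s) = M (unlift |`| s)"
| "unlift (C F k) = (if F = F0 then V (Suc k mod 5) else C (map unlift F) k)"

lemma iota_neq_V: "iota x \<noteq> V k"
  by (cases x) auto

lemma map_iota_neq_F0: "map iota F \<noteq> F0"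
  by (auto simp: F0_def iota_neq_V)

lemma unlift_iota: "well_named x \<Longrightarrow> unlift (iota x) = x"
proof (induction x)
  case (V k)
  then show ?case by (auto simp: well_named.simps dest!: less_5_cases)
next
  case (M s)
  then have "unlift |`| iota |`| s = s"
    by (auto simp: well_named.simps fimage_iff fset.map_comp intro!: fset.map_ident_strong)
  then show ?case by simp
next
  case (C F k)
  then have "map unlift (map iota F) = F"
    by (auto simp: well_named.simps intro!: map_idI)
  then show ?case by (simp add: map_iota_neq_F0)
qed

lemma well_named_iota: "well_named (iota x)"
  by (induction x) (auto simp: well_named.simps F0_def fimage_iff)

lemma well_named_iota_pow: "well_named x \<Longrightarrow> well_named ((iota ^^ p) x)"
  by (induction p) (simp_all add: well_named_iota)

lemma iota_pow_inject:
  assumes "well_named x" "well_named y" "(iota ^^ p) x = (iota ^^ p) y"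
  shows "x = y"
  using assms(3)
proof (induction p)
  case (Suc p)
  then have "unlift (iota ((iota ^^ p) x)) = unlift (iota ((iota ^^ p) y))"
    by simp
  then show ?case
    using Suc.IH unlift_iota well_named_iota_pow assms(1,2) by metis
qed simp

lemma omega_face_iota:
  assumes "length F = 5"
  shows "map iota ` omega_face F = omega_face (map iota F)"
proof -
  have "map iota (petal F k) = petal (map iota F) k" for k
    using assms by (simp add: petal_def petal_corner_def Let_def)
  then show ?thesis
    by (simp add: omega_face_eq central_eq image_image)
qed

lemma Kn_iota: "F \<in> Kn n \<Longrightarrow> map iota F \<in> Kn (Suc n)"
proof (induction n arbitrary: F)
  case 0
  then have "map iota F = central F0"
    by (simp add: Kn_def F0_def central_eq)
  then show ?case
    by (simp add: Kn_def omega_def omega_face_eq)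
next
  case (Suc n)
  then obtain H where H: "H \<in> Kn n" "F \<in> omega_face H"
    by (auto simp: Kn_Suc omega_def)
  then have "map iota F \<in> omega_face (map iota H)"
    using omega_face_iota wf_face_Kn by (fastforce simp: wf_face_def)
  then show ?case
    using Suc.IH[OF H(1)] by (auto simp: Kn_Suc[of "Suc n"] omega_def)
qed

lemma Kn_iota_pow: "F \<in> Kn n \<Longrightarrow> map (iota ^^ m) F \<in> Kn (n + m)"
  by (induction m) (simp_all add: Kn_iota flip: map_map)

lemma mem_cls: "(p, z) \<in> cls n x \<longleftrightarrow> (iota ^^ p) x = (iota ^^ n) z"
  by (simp add: cls_def)

lemma iota_pow_commute: "(iota ^^ a) ((iota ^^ b) x) = (iota ^^ b) ((iota ^^ a) x)"
  by (metis add.commute comp_apply funpow_add)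

lemma cls_subset:
  assumes "1 \<le> m" "well_named y" "(iota ^^ m) x = (iota ^^ n) y"
  shows "cls n x \<subseteq> cls m y"
proof clarify
  fix p z assume "(p, z) \<in> cls n x"
  then have z: "(iota ^^ p) x = (iota ^^ n) z" by (simp add: mem_cls)
  have "(iota ^^ n) ((iota ^^ p) y) = (iota ^^ p) ((iota ^^ n) y)" by (rule iota_pow_commute)
  also have "\<dots> = (iota ^^ p) ((iota ^^ m) x)" using assms(3) by simp
  also have "\<dots> = (iota ^^ m) ((iota ^^ p) x)" by (rule iota_pow_commute)
  also have "\<dots> = (iota ^^ m) ((iota ^^ n) z)" using z by simp
  also have "\<dots> = (iota ^^ n) ((iota ^^ m) z)" by (rule iota_pow_commute)
  finally have "(iota ^^ n) ((iota ^^ p) y) = (iota ^^ n) ((iota ^^ m) z)" .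
  moreover have "well_named ((iota ^^ m) z)"
    using assms(1) by (cases m) (simp_all add: well_named_iota)
  ultimately have "(iota ^^ p) y = (iota ^^ m) z"
    using iota_pow_inject[OF well_named_iota_pow[OF assms(2)]] by blast
  then show "(p, z) \<in> cls m y" by (simp add: mem_cls)
qed

lemma cls_eq:
  assumes "1 \<le> n" "1 \<le> m" "well_named x" "well_named y" "(iota ^^ m) x = (iota ^^ n) y"
  shows "cls n x = cls m y"
  using cls_subset[OF assms(2,4,5)] cls_subset[OF assms(1,3) assms(5)[symmetric]] by blast

text \<open>cls 0 x also contains junk pairs (0, V k) with k \<ge> 5, so the level-0 face of K_faces is never
  identified with its images at positive levels.\<close>

lemma cls_level0_neq:
  assumes "1 \<le> m" "L < 5"
  shows "cls 0 (V L) \<noteq> cls m y"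
proof
  assume eq: "cls 0 (V L) = cls m y"
  have "(m, y) \<in> cls 0 (V L)" using eq by (simp add: mem_cls)
  then have y: "y = (iota ^^ m) (V L)" by (simp add: mem_cls)
  have "(L + 5 + 4) mod 5 = (L + 4) mod 5" by presburger
  then have "(iota ^^ m) (V (L + 5)) = (iota ^^ m) (V L)"
    using assms(1) by (cases m) (simp_all add: funpow_Suc_right del: funpow.simps)
  then have "(0, V (L + 5)) \<in> cls 0 (V L)" using eq y by (simp add: mem_cls)
  then show False by (simp add: mem_cls)
qed

lemma map_cls_eq_if_corner_eq:
  assumes F: "F \<in> Kn n" and G: "G \<in> Kn m" and L: "L < 5"
    and FG: "cls n (F!L) = cls m (G!L)"
  shows "map (cls n) F = map (cls m) G"
proof -
  have wf: "wf_face n F" "wf_face m G" using F G by (simp_all add: wf_face_Kn)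
  have F0_nth: "F0 ! L = V L" using less_5_cases[OF L] by (auto simp: F0_def)
  consider (level0) "n = 0" "m = 0" | (mixed) "n = 0 \<and> 1 \<le> m \<or> m = 0 \<and> 1 \<le> n"
    | (positive) "1 \<le> n" "1 \<le> m"
    by linarith
  then show ?thesis
  proof cases
    case level0
    then show ?thesis using F G by (simp add: Kn_def)
  next
    case mixed
    then show ?thesis
    proof
      assume "n = 0 \<and> 1 \<le> m"
      then show ?thesis using F FG cls_level0_neq[OF _ L] F0_nth by (simp add: Kn_def)
    next
      assume "m = 0 \<and> 1 \<le> n"
      then show ?thesis using G FG[symmetric] cls_level0_neq[OF _ L] F0_nth by (simp add: Kn_def)
    qed
  next
    case positive
    have "(m, G!L) \<in> cls n (F!L)" using FG by (simp add: mem_cls)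
    then have "map (iota ^^ m) F ! L = map (iota ^^ n) G ! L"
      using wf L by (simp add: mem_cls wf_face_def)
    moreover have "map (iota ^^ m) F \<in> Kn (n + m)" "map (iota ^^ n) G \<in> Kn (n + m)"
      using Kn_iota_pow[OF F, of m] Kn_iota_pow[OF G, of n] by (simp_all add: add.commute)
    ultimately have lifted: "map (iota ^^ m) F = map (iota ^^ n) G"
      using corners_determine_facesD[OF conjunct1[OF Kn_corners_edges_determine_faces] _ _ L] by blast
    show ?thesis
    proof (rule nth_equalityI)
      show "length (map (cls n) F) = length (map (cls m) G)"
        using wf by (simp add: wf_face_def)
    next
      fix i assume "i < length (map (cls n) F)"
      then have i: "i < 5" using wf by (simp add: wf_face_def)
      have "(iota ^^ m) (F!i) = (iota ^^ n) (G!i)"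
        using arg_cong[OF lifted, of "\<lambda>xs. xs ! i"] wf i by (simp add: wf_face_def)
      then show "map (cls n) F ! i = map (cls m) G ! i"
        using cls_eq[OF positive] wf_face_vertex_simps(3)[OF wf(1) i]
          wf_face_vertex_simps(3)[OF wf(2) i] wf i by (simp add: wf_face_def)
    qed
  qed
qed

lemma length_K_faces: "X \<in> K_faces \<Longrightarrow> length X = 5"
  unfolding K_faces_def using wf_face_Kn by (auto simp: wf_face_def)

lemma K_faces_corners_determine_faces: "corners_determine_faces K_faces"
  unfolding corners_determine_faces_def
proof (intro ballI allI impI)
  fix X Y L assume "X \<in> K_faces" "Y \<in> K_faces" "L < (5::nat)" "X!L = Y!L"
  moreover obtain n F m G where "F \<in> Kn n" "G \<in> Kn m"
    and X_def: "X = map (cls n) F" and Y_def: "Y = map (cls m) G"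
    using \<open>X \<in> K_faces\<close> \<open>Y \<in> K_faces\<close> unfolding K_faces_def by blast
  ultimately have "cls n (F!L) = cls m (G!L)"
    using length_K_faces[of X] length_K_faces[of Y] by simp
  then show "X = Y"
    unfolding X_def Y_def by (rule map_cls_eq_if_corner_eq[OF \<open>F \<in> Kn n\<close> \<open>G \<in> Kn m\<close> \<open>L < 5\<close>])
qed

section \<open>Isomorphisms fixing a vertex\<close>

lemma chain_connected_induct:
  assumes "chain_connected P" "F \<in> P" "G \<in> P" "Q F"
    and step: "\<And>X Y. X \<in> P \<Longrightarrow> Y \<in> P \<Longrightarrow> share_edge X Y \<Longrightarrow> Q X \<Longrightarrow> Q Y"
  shows "Q G"
proof -
  obtain cs where cs: "cs \<noteq> []" "hd cs = F" "last cs = G" "set cs \<subseteq> P"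
    and adjacent: "\<And>i. Suc i < length cs \<Longrightarrow> share_edge (cs ! i) (cs ! Suc i)"
    using assms(1-3) unfolding chain_connected_def by blast
  have "Q (cs ! i)" if "i < length cs" for i
    using that
  proof (induction i)
    case 0
    then show ?case using cs(1,2) \<open>Q F\<close> by (simp add: hd_conv_nth)
  next
    case (Suc i)
    then have "cs ! i \<in> P" "cs ! Suc i \<in> P" using cs(4) nth_mem by fastforce+
    with Suc show ?case using step adjacent by simp
  qed
  then have "Q (last cs)" using cs(1) by (simp add: last_conv_nth)
  then show ?thesis using cs(3) by simp
qed

lemma share_edge_common_vertex:
  assumes "share_edge X Y" "length X = 5" "length Y = 5"
  obtains a where "a \<in> set X" "a \<in> set Y"
proof -
  obtain i j where ij: "i < 5" "j < 5" and eq: "{X!i, X!((i + 1) mod 5)} = {Y!j, Y!((j + 1) mod 5)}"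
    using assms(1) unfolding share_edge_def face_edges_def by blast
  have "X!i \<in> set X" using ij assms(2) by simp
  moreover have "X!i \<in> set Y"
    using eq ij assms(3) by (auto simp: doubleton_eq_iff)
  ultimately show thesis by (rule that)
qed

lemma map_fixes_face:
  assumes "X \<in> K_faces" "map \<phi> X \<in> K_faces" "a \<in> set X" "\<phi> a = a"
  shows "map \<phi> X = X"
proof -
  obtain L where "L < length X" "X!L = a"
    using assms(3) by (auto simp: in_set_conv_nth)
  then show ?thesis
    using corners_determine_facesD[OF K_faces_corners_determine_faces assms(2,1)] assms(4)
      length_K_faces[OF assms(1)] by simp
qed

lemma map_fixes_chain_connected:
  assumes P: "chain_connected P" "P \<subseteq> K_faces" "map \<phi> ` P \<subseteq> K_faces"
    and F: "F \<in> P" "map \<phi> F = F" and G: "G \<in> P"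
  shows "map \<phi> G = G"
  using P(1) F(1) G F(2)
proof (rule chain_connected_induct)
  fix X Y assume XY: "X \<in> P" "Y \<in> P" "share_edge X Y" "map \<phi> X = X"
  have faces: "X \<in> K_faces" "Y \<in> K_faces" "map \<phi> Y \<in> K_faces"
    using XY(1,2) P(2,3) by auto
  obtain a where "a \<in> set X" "a \<in> set Y"
    using share_edge_common_vertex[OF XY(3) length_K_faces[OF faces(1)] length_K_faces[OF faces(2)]] .
  moreover have "\<phi> a = a" if "a \<in> set X" for a
    using XY(4) that map_eq_conv[of \<phi> X id] by simp
  ultimately show "map \<phi> Y = Y" using map_fixes_face[OF faces(2,3)] by blast
qed

theorem propositionp:
  fixes v :: kvert and P Q :: "kvert list set" and \<phi> :: "kvert \<Rightarrow> kvert"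
  assumes "v \<in> verts K_faces"
    and "finite P" and "P \<subseteq> K_faces" and "chain_connected P" and "v \<in> verts P"
    and "finite Q" and "Q \<subseteq> K_faces" and "chain_connected Q" and "v \<in> verts Q"
    and "cell_iso \<phi> P Q" and "\<phi> v = v"
  shows "P = Q"
proof -
  have image: "map \<phi> ` P = Q" using assms(10) by (simp add: cell_iso_def)
  then have image_faces: "map \<phi> ` P \<subseteq> K_faces" using assms(7) by simp
  obtain F where F: "F \<in> P" "v \<in> set F" using assms(5) by (auto simp: verts_def)
  have "map \<phi> F = F"
    using map_fixes_face F(2) assms(11) subsetD[OF assms(3) F(1)] subsetD[OF image_faces] F(1)
    by blast
  then have "map \<phi> G = G" if "G \<in> P" for G
    using map_fixes_chain_connected[OF assms(4,3) image_faces F(1)] that by blast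
  then show ?thesis using image by simp
qed

end
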